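(* Let $n\ge 2$ be an integer, $C\ge 4$ a constant, $Z$ a finite set, and $T_1,T_2$ rooted $Z$-trees with $\mathrm{Seq}(T_1)=\mathrm{Seq}(T_2)$. Let $Q_1,\dots,Q_k$ and $R_1,\dots,R_m$ be as defined in the context. Suppose $|Q_j|\le 2|Z|/C$ and $|R_l|\le 2|Z|/C$ for all $j,l$, and that at least one of $Q_1,\dots,Q_k,R_1,\dots,R_m$ has size at least $|Z|/\log n$. Then there exists a good pair $(x,Y)$ (with respect to $n$, $T_1$, $T_2$).
   Context: A rooted $Z$-tree is a binary rooted tree with a root of degree two, all other internal nodes of degree three, leaves bijectively labeled by $Z$, and each internal node having a designated left child and right child. $T_v$ is the subtree rooted at node $v$; $\mathrm{Le}(\cdot)$ is the leaf set; the size of a tree is its number of leaves. $x\preceq y$ means $x$ is a descendant of $y$ ($x\prec y$ if also $x\neq y$); $\mathrm{lca}_T(W)$ is the lowest node having all elements of $W$ as descendants. $\mathrm{Seq}(T)$ is the left-to-right leaf ordering given by pre-order traversal (left child before right child). Let $P_1=(u_1,\dots,u_k)$ be the path in $T_1$ from its left-most leaf $u_1$ to its root $u_k$; $Q_1:=$ the one-leaf tree $u_1$ and for $2\le j\le k$, $Q_j:=(T_1)_c$ with $c$ the child of $u_j$ other than $u_{j-1}$. Let $P_2=(w_1,\dots,w_m)$ be the path in $T_2$ from its root $w_1$ to its right-most leaf $w_m$; $R_m:=$ the one-leaf tree $w_m$ and for $1\le l<m$, $R_l:=(T_2)_c$ with $c$ the child of $w_l$ other than $w_{l+1}$. A good pair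 (with respect to $n$, $T_1$, $T_2$) is a pair $(x,Y)$ with $x\in Z$, $\emptyset\ne Y\subset Z$, such that $\mathrm{lca}_{T_1}(Y)\prec\mathrm{lca}_{T_1}(Y\cup\{x\})$, $\mathrm{lca}_{T_2}(Y)\prec\mathrm{lca}_{T_2}(Y\cup\{x\})$, and $|Y|\ge |Z|/(2\log n)$. $\log=\log_2$. *)

theory Defs
  imports Complex_Main "HOL-Library.Sublist"
begin

datatype 'a btree = Leaf 'a | Node "'a btree" "'a btree"

fun leaves :: "'a btree \<Rightarrow> 'a set" where
  "leaves (Leaf a) = {a}"
| "leaves (Node l r) = leaves l \<union> leaves r"

fun seq :: "'a btree \<Rightarrow> 'a list" where
  "seq (Leaf a) = [a]"
| "seq (Node l r) = seq l @ seq r"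

definition tsize :: "'a btree \<Rightarrow> nat" where
  "tsize t = card (leaves t)"

text \<open>Rooted Z-tree: root of degree two (an internal node), leaves bijectively labelled by Z.\<close>
definition is_ztree :: "'a set \<Rightarrow> 'a btree \<Rightarrow> bool" where
  "is_ztree Z t \<longleftrightarrow> (\<exists>l r. t = Node l r) \<and> distinct (seq t) \<and> set (seq t) = Z"

text \<open>Nodes are addressed by positions: paths from the root (False = left child, True = right child).\<close>
fun positions :: "'a btree \<Rightarrow> bool list set" where
  "positions (Leaf a) = {[]}"
| "positions (Node l r) = insert [] (Cons False ` positions l \<union> Cons True ` positions r)"

fun subt :: "'a btree \<Rightarrow> bool list \<Rightarrow> 'a btree" where
  "subt t [] = t"
| "subt (Node l r) (False # p) = subt l p"
| "subt (Node l r) (True # p) = subt r p"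
| "subt (Leaf a) (_ # p) = Leaf a"

definition desc :: "bool list \<Rightarrow> bool list \<Rightarrow> bool" where
  "desc p q \<longleftrightarrow> prefix q p"

definition sdesc :: "bool list \<Rightarrow> bool list \<Rightarrow> bool" where
  "sdesc p q \<longleftrightarrow> desc p q \<and> p \<noteq> q"

definition lca :: "'a btree \<Rightarrow> 'a set \<Rightarrow> bool list" where
  "lca t W = (THE v. v \<in> positions t \<and> W \<subseteq> leaves (subt t v) \<and>
      (\<forall>u \<in> positions t. W \<subseteq> leaves (subt t u) \<longrightarrow> desc v u))"

text \<open>[Q_1,...,Q_k]: the leftmost leaf, then the right subtrees hanging off the left spine,
  from bottom to root.\<close>
fun qlist :: "'a btree \<Rightarrow> 'a btree list" where
  "qlist (Leaf a) = [Leaf a]"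
| "qlist (Node l r) = qlist l @ [r]"

text \<open>[R_1,...,R_m]: the left subtrees hanging off the right spine from the root downwards,
  then the rightmost leaf.\<close>
fun rlist :: "'a btree \<Rightarrow> 'a btree list" where
  "rlist (Leaf a) = [Leaf a]"
| "rlist (Node l r) = l # rlist r"

definition good_pair :: "nat \<Rightarrow> 'a set \<Rightarrow> 'a btree \<Rightarrow> 'a btree \<Rightarrow> 'a \<Rightarrow> 'a set \<Rightarrow> bool" where
  "good_pair n Z T1 T2 x Y \<longleftrightarrow>
     x \<in> Z \<and> Y \<noteq> {} \<and> Y \<subset> Z \<and>
     sdesc (lca T1 Y) (lca T1 (Y \<union> {x})) \<and>
     sdesc (lca T2 Y) (lca T2 (Y \<union> {x})) \<and>
     real (card Y) \<ge> real (card Z) / (2 * log 2 (real n))"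

end

theory Submission imports Defs begin

text \<open>Some spine subtree is large; by symmetry say it is a \<open>Q\<^sub>j\<close> of \<open>T\<^sub>1\<close>. Its leaves form a
  clade \<open>A\<close> of \<open>T\<^sub>1\<close> with \<open>|Z|/log n \<le> |A| \<le> |Z|/2\<close>, and the root of \<open>T\<^sub>2\<close> splits \<open>Z\<close> into the
  clades \<open>K = Le(R\<^sub>1)\<close>, with \<open>|K| \<le> |Z|/2\<close>, and \<open>K'\<close>. One of \<open>A \<inter> K\<close>, \<open>A \<inter> K'\<close> contains half
  of \<open>A\<close> and serves as \<open>Y\<close>. Adding a leaf \<open>x\<close> outside a clade that contains \<open>Y\<close> strictly raises
  the lca, so \<open>x\<close> only has to avoid a clade of each tree around \<open>Y\<close>: for \<open>Y = A \<inter> K\<close> any leaf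
  outside \<open>A \<union> K\<close> will do (it exists since \<open>A\<close> and \<open>K\<close> overlap and are both small), and for
  \<open>Y = A \<inter> K'\<close> the first leaf of \<open>Seq\<close>, which lies in \<open>K\<close> and is in \<open>A\<close> only if \<open>A = Le(Q\<^sub>1)\<close> is
  a single leaf.\<close>

lemma leaves_eq_set_seq: "leaves t = set (seq t)"
  by (induction t) auto

lemma seq_not_Nil: "seq t \<noteq> []"
  by (induction t) auto

lemma leaves_subt_subset: "leaves (subt t p) \<subseteq> leaves t"
  by (induction t p rule: subt.induct) auto

lemma subt_Leaf [simp]: "subt (Leaf a) p = Leaf a"
  by (cases p) auto

lemma subt_append: "subt t (p @ q) = subt (subt t p) q"
proof (induction p arbitrary: t)
  case (Cons b p)
  then show ?case by (cases t; cases b) simp_all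
qed simp

lemma leaves_subt_mono:
  assumes "desc v p"
  shows "leaves (subt t v) \<subseteq> leaves (subt t p)"
proof -
  obtain q where "v = p @ q" using assms unfolding desc_def prefix_def ..
  then show ?thesis using leaves_subt_subset[of "subt t p" q] by (simp add: subt_append)
qed

lemma finite_positions: "finite (positions t)"
  by (induction t) auto

lemma Nil_in_positions: "[] \<in> positions t"
  by (cases t) simp_all

lemma positions_comparable_if_overlap:
  assumes "distinct (seq t)" "p \<in> positions t" "q \<in> positions t"
    and "leaves (subt t p) \<inter> leaves (subt t q) \<noteq> {}"
  shows "prefix p q \<or> prefix q p"
  using assms
proof (induction t arbitrary: p q)
  case (Node l r)
  have disj: "leaves l \<inter> leaves r = {}"
    using Node.prems(1) by (auto simp: leaves_eq_set_seq)
  show ?case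
  proof (cases "p = [] \<or> q = []")
    case False
    then obtain b p' c q' where pq: "p = b # p'" "q = c # q'"
      by (meson list.exhaust)
    show ?thesis
    proof (cases "b = c")
      case True
      have "prefix p' q' \<or> prefix q' p'"
      proof (cases b)
        case True
        have "p' \<in> positions r" "q' \<in> positions r"
          using Node.prems(2,3) pq True \<open>b = c\<close> by auto
        then show ?thesis
          using Node.IH(2)[of p' q'] Node.prems(1,4) pq True \<open>b = c\<close> by simp
      next
        case False
        have "p' \<in> positions l" "q' \<in> positions l"
          using Node.prems(2,3) pq False \<open>b = c\<close> by auto
        then show ?thesis
          using Node.IH(1)[of p' q'] Node.prems(1,4) pq False \<open>b = c\<close> by simp
      qed
      then show ?thesis using pq True by auto
    next
      case False
      obtain x where "x \<in> leaves (subt (Node l r) p)" "x \<in> leaves (subt (Node l r) q)"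
        using Node.prems(4) by blast
      moreover have "leaves (subt (Node l r) p) \<subseteq> leaves (subt (Node l r) [b])"
        "leaves (subt (Node l r) q) \<subseteq> leaves (subt (Node l r) [c])"
        using pq by (simp_all add: leaves_subt_mono desc_def)
      ultimately have "x \<in> leaves (subt (Node l r) [b])" "x \<in> leaves (subt (Node l r) [c])"
        by blast+
      then show ?thesis using disj False by (cases b; cases c) (simp_all, blast+)
    qed
  next
    case True
    then show ?thesis by auto
  qed
qed simp

definition is_lca :: "'a btree \<Rightarrow> 'a set \<Rightarrow> bool list \<Rightarrow> bool" where
  "is_lca t W v \<longleftrightarrow> v \<in> positions t \<and> W \<subseteq> leaves (subt t v) \<and>
      (\<forall>u \<in> positions t. W \<subseteq> leaves (subt t u) \<longrightarrow> desc v u)"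

text \<open>The nodes whose subtree contains a nonempty \<open>W\<close> form a chain, so the deepest one is the lca.\<close>

lemma is_lca_exists:
  assumes "distinct (seq t)" "W \<noteq> {}" "W \<subseteq> leaves t"
  shows "\<exists>v. is_lca t W v"
proof -
  define P where "P = {u \<in> positions t. W \<subseteq> leaves (subt t u)}"
  have "[] \<in> P" using assms(3) Nil_in_positions by (simp add: P_def)
  moreover have fin: "finite P" by (rule finite_subset[OF _ finite_positions]) (auto simp: P_def)
  ultimately have "Max (length ` P) \<in> length ` P" by (intro Max_in) auto
  then obtain v where v: "v \<in> P" "length v = Max (length ` P)" by force
  then have longest: "length u \<le> length v" if "u \<in> P" for u
    using fin that by simp
  have "prefix u v" if "u \<in> P" for u
  proof -
    have "leaves (subt t u) \<inter> leaves (subt t v) \<noteq> {}"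
      using that v(1) assms(2) by (auto simp: P_def)
    then have "prefix u v \<or> prefix v u"
      using positions_comparable_if_overlap[OF assms(1)] that v(1) by (simp add: P_def)
    then show ?thesis using prefix_length_prefix[of u u v] longest[OF that] by auto
  qed
  then have "is_lca t W v" using v(1) by (auto simp: is_lca_def P_def desc_def)
  then show ?thesis ..
qed

lemma is_lca_lca:
  assumes "distinct (seq t)" "W \<noteq> {}" "W \<subseteq> leaves t"
  shows "is_lca t W (lca t W)"
proof -
  obtain v where v: "is_lca t W v" using is_lca_exists[OF assms] ..
  have "w = v" if "is_lca t W w" for w
    using v that prefix_order.antisym unfolding is_lca_def desc_def by blast
  with v have "lca t W = v" unfolding lca_def is_lca_def[symmetric] by (rule the_equality)
  with v show ?thesis by simp
qed

definition clade :: "'a btree \<Rightarrow> 'a set \<Rightarrow> bool" where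
  "clade t B \<longleftrightarrow> (\<exists>p \<in> positions t. leaves (subt t p) = B)"

lemma clade_leaves: "clade t (leaves t)"
  unfolding clade_def by (intro bexI[of _ "[]"]) (simp_all add: Nil_in_positions)

lemma clade_Node_left: "clade l B \<Longrightarrow> clade (Node l r) B"
  unfolding clade_def by (auto intro!: bexI[of _ "False # _"])

lemma clade_Node_right: "clade r B \<Longrightarrow> clade (Node l r) B"
  unfolding clade_def by (auto intro!: bexI[of _ "True # _"])

lemma clade_subset_leaves: "clade t B \<Longrightarrow> B \<subseteq> leaves t"
  unfolding clade_def by (metis leaves_subt_subset)

lemma clade_qlist: "S \<in> set (qlist t) \<Longrightarrow> clade t (leaves S)"
proof (induction t)
  case (Leaf a)
  then show ?case using clade_leaves[of "Leaf a"] by simp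
next
  case (Node l r)
  then show ?case
    by (cases "S = r") (simp_all add: clade_Node_left clade_Node_right clade_leaves)
qed

lemma clade_rlist: "S \<in> set (rlist t) \<Longrightarrow> clade t (leaves S)"
proof (induction t)
  case (Leaf a)
  then show ?case using clade_leaves[of "Leaf a"] by simp
next
  case (Node l r)
  then show ?case
    by (cases "S = l") (simp_all add: clade_Node_left clade_Node_right clade_leaves)
qed

lemma sdesc_lca_insert_outside_clade:
  assumes "distinct (seq t)" "Y \<noteq> {}" "Y \<subseteq> B" "clade t B" "x \<in> leaves t" "x \<notin> B"
  shows "sdesc (lca t Y) (lca t (Y \<union> {x}))"
proof -
  obtain p where p: "p \<in> positions t" "leaves (subt t p) = B"
    using assms(4) unfolding clade_def by blast
  have "Y \<subseteq> leaves t" using assms(3) clade_subset_leaves[OF assms(4)] by (rule order_trans)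
  then have v: "is_lca t Y (lca t Y)" and w: "is_lca t (Y \<union> {x}) (lca t (Y \<union> {x}))"
    using is_lca_lca[OF assms(1)] assms(2,5) by simp_all
  have "desc (lca t Y) p" using v p assms(3) unfolding is_lca_def by metis
  then have "leaves (subt t (lca t Y)) \<subseteq> leaves (subt t p)" by (rule leaves_subt_mono)
  then have "x \<notin> leaves (subt t (lca t Y))" using p(2) assms(6) by blast
  moreover have "x \<in> leaves (subt t (lca t (Y \<union> {x})))" using w unfolding is_lca_def by simp
  moreover have "desc (lca t Y) (lca t (Y \<union> {x}))" using v w unfolding is_lca_def by simp
  ultimately show ?thesis unfolding sdesc_def by metis
qed

lemma hd_seq_in_qlist:
  assumes "distinct (seq t)" "S \<in> set (qlist t)" "hd (seq t) \<in> leaves S"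
  shows "leaves S = {hd (seq t)}"
  using assms
proof (induction t)
  case (Node l r)
  have hd: "hd (seq (Node l r)) = hd (seq l)" using seq_not_Nil[of l] by simp
  show ?case
  proof (cases "S = r")
    case True
    have "hd (seq l) \<in> leaves l" using seq_not_Nil[of l] by (simp add: leaves_eq_set_seq)
    moreover have "leaves l \<inter> leaves r = {}"
      using Node.prems(1) by (simp add: leaves_eq_set_seq)
    moreover have "hd (seq l) \<in> leaves r" using Node.prems(3) hd True by simp
    ultimately show ?thesis by blast
  next
    case False
    then have "S \<in> set (qlist l)" using Node.prems(2) by simp
    then show ?thesis using Node.IH(1) Node.prems(1,3) hd by simp
  qed
qed simp

lemma last_seq_in_rlist:
  assumes "distinct (seq t)" "S \<in> set (rlist t)" "last (seq t) \<in> leaves S"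
  shows "leaves S = {last (seq t)}"
  using assms
proof (induction t)
  case (Node l r)
  have last: "last (seq (Node l r)) = last (seq r)" using seq_not_Nil[of r] by simp
  show ?case
  proof (cases "S = l")
    case True
    have "last (seq r) \<in> leaves r" using seq_not_Nil[of r] by (simp add: leaves_eq_set_seq)
    moreover have "leaves l \<inter> leaves r = {}"
      using Node.prems(1) by (simp add: leaves_eq_set_seq)
    moreover have "last (seq r) \<in> leaves l" using Node.prems(3) last True by simp
    ultimately show ?thesis by blast
  next
    case False
    then have "S \<in> set (rlist r)" using Node.prems(2) by simp
    then show ?thesis using Node.IH(2) Node.prems(1,3) last by simp
  qed
qed simp

lemma ztree_leaves: "is_ztree Z t \<Longrightarrow> leaves t = Z"
  unfolding is_ztree_def by (simp add: leaves_eq_set_seq)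

lemma ztree_distinct: "is_ztree Z t \<Longrightarrow> distinct (seq t)"
  unfolding is_ztree_def by simp

lemma good_pair_commute: "good_pair n Z T1 T2 x Y \<longleftrightarrow> good_pair n Z T2 T1 x Y"
  unfolding good_pair_def by blast

lemma good_pair_if_clades_avoid:
  assumes T1: "is_ztree Z T1" and T2: "is_ztree Z T2"
    and Y: "Y \<noteq> {}" "Y \<subseteq> A" "clade T1 A" "Y \<subseteq> B" "clade T2 B"
    and x: "x \<in> Z" "x \<notin> A" "x \<notin> B"
    and card_Y: "real (card Y) \<ge> real (card Z) / (2 * log 2 (real n))"
  shows "good_pair n Z T1 T2 x Y"
proof -
  have "A \<subseteq> Z" using clade_subset_leaves[OF Y(3)] ztree_leaves[OF T1] by simp
  then have "Y \<subset> Z" using Y(2) x(1,2) by blast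
  moreover have "sdesc (lca T1 Y) (lca T1 (Y \<union> {x}))"
    using sdesc_lca_insert_outside_clade[OF ztree_distinct[OF T1] Y(1,2,3)] x ztree_leaves[OF T1]
    by simp
  moreover have "sdesc (lca T2 Y) (lca T2 (Y \<union> {x}))"
    using sdesc_lca_insert_outside_clade[OF ztree_distinct[OF T2] Y(1,4,5)] x ztree_leaves[OF T2]
    by simp
  ultimately show ?thesis using x(1) Y(1) card_Y unfolding good_pair_def by simp
qed

lemma exists_outside_overlapping_sets:
  assumes "finite Z" "A \<subseteq> Z" "B \<subseteq> Z" "A \<inter> B \<noteq> {}" "card A + card B \<le> card Z"
  shows "\<exists>x \<in> Z. x \<notin> A \<union> B"
proof -
  have "finite A" "finite B" using assms(1-3) finite_subset by auto
  then have "card (A \<union> B) < card A + card B"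
    using card_Un_Int[of A B] assms(4) by (simp add: card_gt_0_iff)
  with assms(5) have "A \<union> B \<noteq> Z" by auto
  with assms(2,3) show ?thesis by blast
qed

lemma good_pair_of_large_clade:
  assumes T1: "is_ztree Z T1" and T2: "is_ztree Z T2" and "finite Z" "n \<ge> 2"
    and A: "clade T1 A" "real (card Z) / log 2 (real n) \<le> real (card A)"
      "real (card A) \<le> real (card Z) / 2"
    and K: "clade T2 K" "clade T2 K'" "K \<union> K' = Z" "real (card K) \<le> real (card Z) / 2"
    and e: "e \<in> K" "e \<notin> K'" "e \<notin> A \<or> A = {e}"
  shows "\<exists>x Y. good_pair n Z T1 T2 x Y"
proof -
  let ?bound = "real (card Z) / (2 * log 2 (real n))"
  have "A \<subseteq> Z" using clade_subset_leaves[OF A(1)] ztree_leaves[OF T1] by simp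
  have "K \<subseteq> Z" using clade_subset_leaves[OF K(1)] ztree_leaves[OF T2] by simp
  have "card Z > 0" using e(1) \<open>K \<subseteq> Z\<close> \<open>finite Z\<close> card_gt_0_iff by blast
  moreover have "log 2 (real n) > 0" using \<open>n \<ge> 2\<close> by simp
  ultimately have "?bound > 0" by simp
  have "A = (A \<inter> K) \<union> (A \<inter> K')" using \<open>A \<subseteq> Z\<close> K(3) by blast
  then have "card A \<le> card (A \<inter> K) + card (A \<inter> K')"
    by (metis card_Un_le)
  moreover have "real (card A) / 2 \<ge> ?bound" using A(2) by (simp add: field_simps)
  ultimately consider "real (card (A \<inter> K)) \<ge> ?bound" | "real (card (A \<inter> K')) \<ge> ?bound"
    by linarith
  then show ?thesis
  proof cases
    case 1
    then have "A \<inter> K \<noteq> {}" using \<open>?bound > 0\<close> by auto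
    moreover have "card K + card A \<le> card Z" using A(3) K(4) by linarith
    ultimately obtain x where x: "x \<in> Z" "x \<notin> K \<union> A"
      using exists_outside_overlapping_sets[OF \<open>finite Z\<close> \<open>K \<subseteq> Z\<close> \<open>A \<subseteq> Z\<close>]
      by (auto simp: Int_commute)
    have "good_pair n Z T1 T2 x (A \<inter> K)"
      by (rule good_pair_if_clades_avoid[OF T1 T2 \<open>A \<inter> K \<noteq> {}\<close> _ A(1) _ K(1) x(1)])
        (use x 1 in auto)
    then show ?thesis by blast
  next
    case 2
    then have "A \<inter> K' \<noteq> {}" using \<open>?bound > 0\<close> by auto
    then have "e \<notin> A" using e(2,3) by blast
    moreover have "e \<in> Z" using e(1) \<open>K \<subseteq> Z\<close> by blast
    ultimately have "good_pair n Z T1 T2 e (A \<inter> K')"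
      using good_pair_if_clades_avoid[OF T1 T2 \<open>A \<inter> K' \<noteq> {}\<close> _ A(1) _ K(2)] e(2) 2
      by simp
    then show ?thesis by blast
  qed
qed

lemma good_pair_of_large_qlist:
  assumes T1: "is_ztree Z T1" and T2: "is_ztree Z T2" and "finite Z" "n \<ge> 2"
    and "seq T1 = seq T2"
    and S: "S \<in> set (qlist T1)" "real (card Z) / log 2 (real n) \<le> real (tsize S)"
      "real (tsize S) \<le> real (card Z) / 2"
    and small: "\<forall>R \<in> set (rlist T2). real (tsize R) \<le> real (card Z) / 2"
  shows "\<exists>x Y. good_pair n Z T1 T2 x Y"
proof -
  obtain L R where T2_eq: "T2 = Node L R" using T2 unfolding is_ztree_def by blast
  let ?e = "hd (seq T1)"
  have "?e = hd (seq L)" using \<open>seq T1 = seq T2\<close> T2_eq seq_not_Nil[of L] by simp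
  then have e_L: "?e \<in> leaves L" using seq_not_Nil[of L] by (simp add: leaves_eq_set_seq)
  moreover have "leaves L \<inter> leaves R = {}"
    using ztree_distinct[OF T2] T2_eq by (simp add: leaves_eq_set_seq)
  ultimately have e_R: "?e \<notin> leaves R" by blast
  have "clade T2 (leaves L)" "clade T2 (leaves R)"
    unfolding T2_eq by (rule clade_Node_left[OF clade_leaves] clade_Node_right[OF clade_leaves])+
  moreover have "leaves L \<union> leaves R = Z" using ztree_leaves[OF T2] T2_eq by simp
  moreover have "real (card (leaves L)) \<le> real (card Z) / 2"
    using small T2_eq by (simp add: tsize_def)
  moreover have "?e \<notin> leaves S \<or> leaves S = {?e}"
    using hd_seq_in_qlist[OF ztree_distinct[OF T1] S(1)] by blast
  ultimately show ?thesis
    using good_pair_of_large_clade[OF T1 T2 \<open>finite Z\<close> \<open>n \<ge> 2\<close> clade_qlist[OF S(1)]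
        _ _ _ _ _ _ e_L e_R]
      S(2,3) unfolding tsize_def by blast
qed

lemma good_pair_of_large_rlist:
  assumes T1: "is_ztree Z T1" and T2: "is_ztree Z T2" and "finite Z" "n \<ge> 2"
    and "seq T1 = seq T2"
    and S: "S \<in> set (rlist T2)" "real (card Z) / log 2 (real n) \<le> real (tsize S)"
      "real (tsize S) \<le> real (card Z) / 2"
    and small: "\<forall>Q \<in> set (qlist T1). real (tsize Q) \<le> real (card Z) / 2"
  shows "\<exists>x Y. good_pair n Z T1 T2 x Y"
proof -
  obtain L R where T1_eq: "T1 = Node L R" using T1 unfolding is_ztree_def by blast
  let ?e = "last (seq T2)"
  have "?e = last (seq R)" using \<open>seq T1 = seq T2\<close>[symmetric] T1_eq seq_not_Nil[of R] by simp
  then have e_R: "?e \<in> leaves R" using seq_not_Nil[of R] by (simp add: leaves_eq_set_seq)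
  moreover have "leaves L \<inter> leaves R = {}"
    using ztree_distinct[OF T1] T1_eq by (simp add: leaves_eq_set_seq)
  ultimately have e_L: "?e \<notin> leaves L" by blast
  have "clade T1 (leaves R)" "clade T1 (leaves L)"
    unfolding T1_eq by (rule clade_Node_right[OF clade_leaves] clade_Node_left[OF clade_leaves])+
  moreover have "leaves R \<union> leaves L = Z" using ztree_leaves[OF T1] T1_eq by auto
  moreover have "real (card (leaves R)) \<le> real (card Z) / 2"
    using small T1_eq by (simp add: tsize_def)
  moreover have "?e \<notin> leaves S \<or> leaves S = {?e}"
    using last_seq_in_rlist[OF ztree_distinct[OF T2] S(1)] by blast
  ultimately have "\<exists>x Y. good_pair n Z T2 T1 x Y"
    using good_pair_of_large_clade[OF T2 T1 \<open>finite Z\<close> \<open>n \<ge> 2\<close> clade_rlist[OF S(1)]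
        _ _ _ _ _ _ e_R e_L]
      S(2,3) unfolding tsize_def by blast
  then show ?thesis by (metis good_pair_commute)
qed

theorem lemma3:
  fixes n :: nat and C :: real and Z :: "'a set" and T1 T2 :: "'a btree"
  assumes "n \<ge> 2" and "C \<ge> 4" and "finite Z"
    and "is_ztree Z T1" and "is_ztree Z T2"
    and "seq T1 = seq T2"
    and "\<forall>Q \<in> set (qlist T1). real (tsize Q) \<le> 2 * real (card Z) / C"
    and "\<forall>R \<in> set (rlist T2). real (tsize R) \<le> 2 * real (card Z) / C"
    and "\<exists>S \<in> set (qlist T1) \<union> set (rlist T2). real (tsize S) \<ge> real (card Z) / log 2 (real n)"
  shows "\<exists>x Y. good_pair n Z T1 T2 x Y"
proof -
  have "2 * real (card Z) / C \<le> 2 * real (card Z) / 4"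
    using \<open>C \<ge> 4\<close> by (intro divide_left_mono) auto
  then have small_Q: "\<forall>Q \<in> set (qlist T1). real (tsize Q) \<le> real (card Z) / 2"
    and small_R: "\<forall>R \<in> set (rlist T2). real (tsize R) \<le> real (card Z) / 2"
    using assms(7,8) by fastforce+
  obtain S where S: "S \<in> set (qlist T1) \<union> set (rlist T2)"
    "real (card Z) / log 2 (real n) \<le> real (tsize S)"
    using assms(9) by blast
  show ?thesis
  proof (cases "S \<in> set (qlist T1)")
    case True
    then show ?thesis
      using good_pair_of_large_qlist[OF assms(4,5,3,1,6) True S(2)] small_Q small_R by blast
  next
    case False
    then have "S \<in> set (rlist T2)" using S(1) by blast
    then show ?thesis
      using good_pair_of_large_rlist[OF assms(4,5,3,1,6) _ S(2)] small_Q small_R by blast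
  qed
qed

end
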